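(* Let $(N,m)$ be a marked P/T net and $\mathcal U[N,m]=(O,m')$ its unfolding. Under the identification of a token of colour $(h,i)$ in place $a$ of $\overleftarrow{[\![N]\!]}$ with the place $a(h,i)$ of $O$, of a firing of a forward transition $\mathsf t$ of $\overleftarrow{[\![N]\!]}$ under substitution $\sigma$ with the transition $\mathsf t(H)$ of $\overleftarrow O$ where $H={}^\bullet\mathsf t_{[\![N]\!]}\sigma$, and of a firing of $\underline{\mathsf t}$ under $\sigma$ with $\underline{\mathsf t(H)}$ for the same $H$: for every firing sequence $s$ and marking $m''$, $(\overleftarrow{[\![N]\!]},[\![m]\!])\xrightarrow{s}(\overleftarrow{[\![N]\!]},m'')$ if and only if $(\overleftarrow O,m')\xrightarrow{s}(\overleftarrow O,m'')$.
   Context: A P/T net $N=(S_N,T_N,{}^\bullet\_,\_^\bullet)$ has disjoint sets of places and transitions and nonempty preset/postset multisets ${}^\bullet\mathsf t,\mathsf t^\bullet$ over $S_N$; markings are multisets of places and firing is: if ${}^\bullet\mathsf t=m_1$, $\mathsf t^\bullet=m_2$ then $(N,m_1\oplus m_3)\xrightarrow{\mathsf t}(N,m_2\oplus m_3)$. Unfolding: with $\preceq$ the reflexive-transitive closure of $\{(a,\mathsf t)\mid a\in{}^\bullet\mathsf t\}\cup\{(\mathsf t,a)\mid a\in\mathsf t^\bullet\}$, $x\#y$ iff there are transitions $\mathsf t_1\preceq x$, $\mathsf t_2\preceq y$, $\mathsf t_1\ne\mathsf t_2$, ${}^\bullet\mathsf t_1\cap{}^\bullet\mathsf t_2\ne\emptyset$,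 $x\ co\ y$ iff $x\ne y$, $x\not\preceq y$, $y\not\preceq x$, not $x\#y$, and $CO(X)$ iff elements of $X$ are pairwise $co$ and finitely many transitions lie below $X$, the unfolding $\mathcal U[N,m]$ is the least net with: places $a(\emptyset,i)$ for $1\le i\le m(a)$; a transition $\mathsf t(H)$ with preset $H$ whenever $H=\{a_j(h_j,i_j)\mid j\in J\}$ is a set of its places with $CO(H)$ and ${}^\bullet\mathsf t=\bigoplus_j a_j$; and for each $x=\mathsf t(H)$ the places $a(\{x\},i)$, $1\le i\le\mathsf t^\bullet(a)$, forming its postset. Its initial marking $m'$ is $\{a(\emptyset,i)\mid 1\le i\le m(a)\}$. For any net (coloured or not) $M$, its reversible version $\overleftarrow M$ has the same places and transitions $T_M\cup\{\underline{\mathsf t}\mid\mathsf t\in T_M\}$ with ${}^\bullet\underline{\mathsf t}=\mathsf t^\bullet$ and $\underline{\mathsf t}^\bullet={}^\bullet\mathsf t$. Coloured nets: fix infinite sets $\mathcal X$ of variables and $\mathcal C\supseteq\mathcal X$ of colours, where $\mathcal C$ is the least set containing $\mathcal X$ with $(h,n)\in\mathcal C$ for $h\in 2^{\mathcal C}$, $n\in\mathbb N$, and $x(h)\in\mathcal C$ for $x$ a place or transition name and $h\in 2^{\mathcal C}$. A C-P/T net has places, transitions, and pre/postsets that are multisets over $S\times\mathcal C$ (written $a(c)$); markings are variable-free multisets over $S\times\mathcal C$. Coloured firing: for $\mathsf t=m_1[\rangle m_2$ and a substitution $\sigma:\mathcal X\rightharpoonup\mathcal C$, $(N,m_1\sigma\oplus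 m_3)\xrightarrow{\mathsf t}(N,m_2\sigma\oplus m_3)$. The encoding $[\![N]\!]$ of a P/T net has the same places and transitions, with ${}^\bullet\mathsf t_{[\![N]\!]}=a_1(x_1)\oplus\dots\oplus a_n(x_n)$ for ${}^\bullet\mathsf t_N=a_1\oplus\dots\oplus a_n$ and pairwise distinct variables $x_i$, and $\mathsf t^\bullet_{[\![N]\!]}=\{a(\{\mathsf t(h)\},i)\mid a\in\mathrm{supp}(\mathsf t^\bullet_N),\ 1\le i\le\mathsf t^\bullet_N(a),\ h={}^\bullet\mathsf t_{[\![N]\!]}\}$ (token in place $a$ with colour $(\{\mathsf t(h)\},i)$); the variables of pre- and postsets of each transition coincide. The encoded initial marking is $[\![m]\!]=\{a(\emptyset,i)\mid a\in\mathrm{supp}(m),\ 1\le i\le m(a)\}$. The reversible version of the marked P/T net $(N,m)$ is the marked C-P/T net $(\overleftarrow{[\![N]\!]},[\![m]\!])$. *)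

theory Defs
  imports Main "HOL-Library.Multiset" "HOL-Library.FSet"
begin

text \<open>A place name applied to a colour, a(c), is represented as the pair (a,c);
  hence the colour t(H) carries a finite set of such pairs.\<close>

datatype ('s, 't) col =
    CVar nat
  | CPair "('s, 't) col fset" nat
  | CTr 't "('s \<times> ('s, 't) col) fset"

primrec subst :: "(nat \<Rightarrow> ('s, 't) col option) \<Rightarrow> ('s, 't) col \<Rightarrow> ('s, 't) col" where
  "subst \<sigma> (CVar x) = (case \<sigma> x of None \<Rightarrow> CVar x | Some c \<Rightarrow> c)"
| "subst \<sigma> (CPair h n) = CPair (fimage (subst \<sigma>) h) n"
| "subst \<sigma> (CTr t h) = CTr t (fimage (map_prod id (subst \<sigma>)) h)"

primrec cvars :: "('s, 't) col \<Rightarrow> nat set" where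
  "cvars (CVar x) = {x}"
| "cvars (CPair h n) = \<Union> (fset (fimage cvars h))"
| "cvars (CTr t h) = \<Union> (snd ` fset (fimage (map_prod id cvars) h))"

definition msubst :: "(nat \<Rightarrow> ('s, 't) col option) \<Rightarrow> ('s \<times> ('s, 't) col) multiset
    \<Rightarrow> ('s \<times> ('s, 't) col) multiset" where
  "msubst \<sigma> M = image_mset (map_prod id (subst \<sigma>)) M"

definition ground :: "('s \<times> ('s, 't) col) multiset \<Rightarrow> bool" where
  "ground M \<longleftrightarrow> (\<forall>(a, c) \<in> set_mset M. cvars c = {})"

definition mset_to_fset :: "'a multiset \<Rightarrow> 'a fset" where
  "mset_to_fset M = Abs_fset (set_mset M)"

record ('p, 'u) ptnet =
  places :: "'p set"
  trans :: "'u set"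
  pre :: "'u \<Rightarrow> 'p multiset"
  post :: "'u \<Rightarrow> 'p multiset"

definition wf_ptnet :: "('p, 'u) ptnet \<Rightarrow> bool" where
  "wf_ptnet N \<longleftrightarrow> (\<forall>t \<in> trans N. pre N t \<noteq> {#} \<and> post N t \<noteq> {#}
      \<and> set_mset (pre N t) \<subseteq> places N \<and> set_mset (post N t) \<subseteq> places N)"

definition marking_of :: "('p, 'u) ptnet \<Rightarrow> 'p multiset \<Rightarrow> bool" where
  "marking_of N m \<longleftrightarrow> set_mset m \<subseteq> places N"

definition ptfire :: "('p, 'u) ptnet \<Rightarrow> 'p multiset \<Rightarrow> 'u \<Rightarrow> 'p multiset \<Rightarrow> bool" where
  "ptfire N M t M' \<longleftrightarrow> t \<in> trans N \<and> (\<exists>m3. M = pre N t + m3 \<and> M' = post N t + m3)"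

inductive ptreach :: "('p, 'u) ptnet \<Rightarrow> 'p multiset \<Rightarrow> 'u list \<Rightarrow> 'p multiset \<Rightarrow> bool"
  for N where
  refl: "ptreach N M [] M"
| step: "ptreach N M s M1 \<Longrightarrow> ptfire N M1 t M2 \<Longrightarrow> ptreach N M (s @ [t]) M2"

text \<open>Fwd t is t, Bwd t is the reverse transition underline t.\<close>
datatype 'u rt = Fwd 'u | Bwd 'u

definition rev_ptnet :: "('p, 'u) ptnet \<Rightarrow> ('p, 'u rt) ptnet" where
  "rev_ptnet N = \<lparr> places = places N,
     trans = Fwd ` trans N \<union> Bwd ` trans N,
     pre = (\<lambda>u. case u of Fwd t \<Rightarrow> pre N t | Bwd t \<Rightarrow> post N t),
     post = (\<lambda>u. case u of Fwd t \<Rightarrow> post N t | Bwd t \<Rightarrow> pre N t) \<rparr>"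

record ('s, 't, 'u) cnet =
  cplaces :: "'s set"
  ctrans :: "'u set"
  cpre :: "'u \<Rightarrow> ('s \<times> ('s, 't) col) multiset"
  cpost :: "'u \<Rightarrow> ('s \<times> ('s, 't) col) multiset"

definition rev_cnet :: "('s, 't, 'u) cnet \<Rightarrow> ('s, 't, 'u rt) cnet" where
  "rev_cnet C = \<lparr> cplaces = cplaces C,
     ctrans = Fwd ` ctrans C \<union> Bwd ` ctrans C,
     cpre = (\<lambda>u. case u of Fwd t \<Rightarrow> cpre C t | Bwd t \<Rightarrow> cpost C t),
     cpost = (\<lambda>u. case u of Fwd t \<Rightarrow> cpost C t | Bwd t \<Rightarrow> cpre C t) \<rparr>"

definition cfire :: "('s, 't, 'u) cnet \<Rightarrow> ('s \<times> ('s, 't) col) multiset \<Rightarrow> 'u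
    \<Rightarrow> (nat \<Rightarrow> ('s, 't) col option) \<Rightarrow> ('s \<times> ('s, 't) col) multiset \<Rightarrow> bool" where
  "cfire C M t \<sigma> M' \<longleftrightarrow> t \<in> ctrans C \<and> ground M \<and> ground M' \<and>
     (\<exists>m3. M = msubst \<sigma> (cpre C t) + m3 \<and> M' = msubst \<sigma> (cpost C t) + m3)"

definition post_col :: "('s, 't) ptnet \<Rightarrow> 't \<Rightarrow> ('s \<times> ('s, 't) col) fset
    \<Rightarrow> ('s \<times> ('s, 't) col) multiset" where
  "post_col N t h = mset_set {(a, CPair {|CTr t h|} i) | a i. 1 \<le> i \<and> i \<le> count (post N t) a}"

definition valid_vars :: "('s, 't) ptnet \<Rightarrow> ('t \<Rightarrow> ('s \<times> nat) multiset) \<Rightarrow> bool" where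
  "valid_vars N vs \<longleftrightarrow> (\<forall>t \<in> trans N. image_mset fst (vs t) = pre N t
      \<and> (\<forall>x. count (image_mset snd (vs t)) x \<le> 1))"

definition enc_pre :: "('t \<Rightarrow> ('s \<times> nat) multiset) \<Rightarrow> 't \<Rightarrow> ('s \<times> ('s, 't) col) multiset" where
  "enc_pre vs t = image_mset (\<lambda>(a, x). (a, CVar x)) (vs t)"

definition enc :: "('s, 't) ptnet \<Rightarrow> ('t \<Rightarrow> ('s \<times> nat) multiset) \<Rightarrow> ('s, 't, 't) cnet" where
  "enc N vs = \<lparr> cplaces = places N, ctrans = trans N,
     cpre = enc_pre vs,
     cpost = (\<lambda>t. post_col N t (mset_to_fset (enc_pre vs t))) \<rparr>"

definition enc_marking :: "'s multiset \<Rightarrow> ('s \<times> ('s, 't) col) multiset" where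
  "enc_marking m = mset_set {(a, CPair {||} i) | a i. 1 \<le> i \<and> i \<le> count m a}"

text \<open>Places of the unfolding are pairs (a, c) (place a(h,i) is (a, CPair h i));
  transitions are pairs (t, H) (transition t(H)).  Nodes are either.\<close>
type_synonym ('s, 't) uplace = "'s \<times> ('s, 't) col"
type_synonym ('s, 't) utrans = "'t \<times> ('s, 't) uplace fset"
type_synonym ('s, 't) unode = "('s, 't) uplace + ('s, 't) utrans"

definition uflow :: "('s, 't) ptnet \<Rightarrow> (('s, 't) unode \<times> ('s, 't) unode) set" where
  "uflow N = {(Inl p, Inr (t, H)) | p t H. p |\<in>| H}
     \<union> {(Inr (t, H), Inl (a, CPair {|CTr t H|} i)) | t H a i. 1 \<le> i \<and> i \<le> count (post N t) a}"

definition ule :: "('s, 't) ptnet \<Rightarrow> ('s, 't) unode \<Rightarrow> ('s, 't) unode \<Rightarrow> bool" where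
  "ule N x y \<longleftrightarrow> (x, y) \<in> (uflow N)\<^sup>*"

definition uconfl :: "('s, 't) ptnet \<Rightarrow> ('s, 't) unode \<Rightarrow> ('s, 't) unode \<Rightarrow> bool" where
  "uconfl N x y \<longleftrightarrow> (\<exists>t1 H1 t2 H2. ule N (Inr (t1, H1)) x \<and> ule N (Inr (t2, H2)) y
      \<and> (t1, H1) \<noteq> (t2, H2) \<and> H1 |\<inter>| H2 \<noteq> {||})"

definition uco :: "('s, 't) ptnet \<Rightarrow> ('s, 't) unode \<Rightarrow> ('s, 't) unode \<Rightarrow> bool" where
  "uco N x y \<longleftrightarrow> x \<noteq> y \<and> \<not> ule N x y \<and> \<not> ule N y x \<and> \<not> uconfl N x y"

definition UCO :: "('s, 't) ptnet \<Rightarrow> ('s, 't) unode set \<Rightarrow> bool" where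
  "UCO N X \<longleftrightarrow> (\<forall>x \<in> X. \<forall>y \<in> X. x \<noteq> y \<longrightarrow> uco N x y)
      \<and> finite {u. \<exists>x \<in> X. ule N (Inr u) x}"

inductive_set
  uplaces :: "('s, 't) ptnet \<Rightarrow> 's multiset \<Rightarrow> ('s, 't) uplace set"
  and utransitions :: "('s, 't) ptnet \<Rightarrow> 's multiset \<Rightarrow> ('s, 't) utrans set"
  for N m where
  init: "1 \<le> i \<Longrightarrow> i \<le> count m a \<Longrightarrow> (a, CPair {||} i) \<in> uplaces N m"
| trn: "t \<in> trans N \<Longrightarrow> (\<forall>p \<in> fset H. p \<in> uplaces N m) \<Longrightarrow> UCO N (Inl ` fset H)
        \<Longrightarrow> image_mset fst (mset_set (fset H)) = pre N t \<Longrightarrow> (t, H) \<in> utransitions N m"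
| pst: "(t, H) \<in> utransitions N m \<Longrightarrow> 1 \<le> i \<Longrightarrow> i \<le> count (post N t) a
        \<Longrightarrow> (a, CPair {|CTr t H|} i) \<in> uplaces N m"

definition unfold_net :: "('s, 't) ptnet \<Rightarrow> 's multiset \<Rightarrow> (('s, 't) uplace, ('s, 't) utrans) ptnet" where
  "unfold_net N m = \<lparr> places = uplaces N m, trans = utransitions N m,
     pre = (\<lambda>(t, H). mset_set (fset H)),
     post = (\<lambda>(t, H). post_col N t H) \<rparr>"

definition unfold_marking :: "'s multiset \<Rightarrow> ('s, 't) uplace multiset" where
  "unfold_marking m = enc_marking m"

text \<open>A firing of t (resp. underline t) under \<sigma> is identified with t(H) (resp.
  underline t(H)) where H is the preset of t in the encoding, instantiated by \<sigma>.\<close>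
definition clabel :: "('s, 't, 't) cnet \<Rightarrow> 't rt \<Rightarrow> (nat \<Rightarrow> ('s, 't) col option)
    \<Rightarrow> ('s, 't) utrans rt" where
  "clabel C u \<sigma> = (case u of
      Fwd t \<Rightarrow> Fwd (t, mset_to_fset (msubst \<sigma> (cpre C t)))
    | Bwd t \<Rightarrow> Bwd (t, mset_to_fset (msubst \<sigma> (cpre C t))))"

inductive creach :: "('s, 't, 't) cnet \<Rightarrow> ('s \<times> ('s, 't) col) multiset
    \<Rightarrow> ('s, 't) utrans rt list \<Rightarrow> ('s \<times> ('s, 't) col) multiset \<Rightarrow> bool"
  for C where
  refl: "creach C M [] M"
| step: "creach C M s M1 \<Longrightarrow> cfire (rev_cnet C) M1 u \<sigma> M2
         \<Longrightarrow> creach C M (s @ [clabel C u \<sigma>]) M2"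

end

theory Submission
  imports Defs
begin

text \<open>Every marking reachable in either net is the cut of a finite configuration of the
  unfolding: a set C of transitions t(H) with pairwise disjoint presets, each of whose
  consumed places was produced, either initially or by a member of C.  The cut
  consists of the produced places that are not consumed, each with multiplicity one.
  Firing t(H) forwards adds it to C and firing it backwards removes it, so the invariant
  is preserved.  On such a marking the two step relations agree: a place of the cut has
  its whole history inside C, so any subset of the cut is a co-set with finite history
  and the preset H picked out by a substitution is a genuine transition t(H) of the
  unfolding; conversely, as the variables of a preset are pairwise distinct, every
  transition t(H) of the unfolding is an instance of t.\<close>

lemma mset_set_set_mset_eq_iff: "mset_set (set_mset A) = A \<longleftrightarrow> (\<forall>x. count A x \<le> 1)"
proof -
  have "count (mset_set (set_mset A)) x = count A x \<longleftrightarrow> count A x \<le> 1" for x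
    using count_eq_zero_iff[of A x] by (auto simp: count_mset_set' le_Suc_eq)
  then show ?thesis by (metis multiset_eqI)
qed

lemma mset_set_set_mset_if_subseteq_mset_set:
  assumes "A \<subseteq># mset_set S"
  shows "mset_set (set_mset A) = A"
proof -
  have "count A x \<le> 1" for x
    using mset_subset_eq_count[OF assms, of x] by (simp add: count_mset_set' split: if_splits)
  then show ?thesis by (simp add: mset_set_set_mset_eq_iff)
qed

lemma mset_set_set_mset_if_size_eq_card:
  assumes "size A = card (set_mset A)"
  shows "mset_set (set_mset A) = A"
proof (rule ccontr)
  assume "mset_set (set_mset A) \<noteq> A"
  then have "mset_set (set_mset A) \<subset># A"
    using mset_set_set_mset_msubset by (simp add: subset_mset.less_le)
  then have "size (mset_set (set_mset A)) < size A" by (rule mset_subset_size)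
  then show False using assms by simp
qed

lemma subset_if_mset_set_eq_add:
  assumes "finite X" and "mset_set S = mset_set X + R"
  shows "X \<subseteq> S"
proof -
  have "X \<subseteq> set_mset (mset_set S)" using assms by auto
  then show ?thesis by (cases "finite S") auto
qed

lemma mset_set_exchange:
  assumes "finite S" "finite X" "finite Y" "mset_set S = mset_set X + R" "Y \<inter> (S - X) = {}"
  shows "mset_set Y + R = mset_set (Y \<union> (S - X))"
proof -
  have "R = mset_set (S - X)"
    using assms(4) by (simp add: mset_set_Diff[OF assms(1) subset_if_mset_set_eq_add[OF assms(2,4)]])
  then show ?thesis using assms by (simp add: mset_set_Union)
qed

lemma ex_map_snd_if_same_fst:
  assumes "image_mset fst A = image_mset fst B" and "\<forall>x. count (image_mset snd A) x \<le> 1"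
  shows "\<exists>f. image_mset (map_prod id f) A = B"
  using assms
proof (induction A arbitrary: B)
  case empty
  then show ?case by simp
next
  case (add ax A)
  obtain a x where ax: "ax = (a, x)" by fastforce
  have "a \<in># image_mset fst B" using add.prems(1) ax by (metis image_mset_add_mset fst_conv union_single_eq_member)
  then obtain c where c: "(a, c) \<in># B" by force
  define B' where "B' = B - {#(a, c)#}"
  have B: "B = add_mset (a, c) B'" using c by (simp add: B'_def)
  have "image_mset fst A = image_mset fst B'" using add.prems(1) ax B by simp
  moreover have "\<forall>y. count (image_mset snd A) y \<le> 1"
  proof
    fix y show "count (image_mset snd A) y \<le> 1"
      using add.prems(2)[rule_format, of y] ax by (auto split: if_splits)
  qed
  ultimately obtain f where f: "image_mset (map_prod id f) A = B'" using add.IH by blast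
  have "x \<notin># image_mset snd A"
    using add.prems(2)[rule_format, of x] ax by (simp add: count_eq_zero_iff)
  then have "image_mset (map_prod id (f(x := c))) A = image_mset (map_prod id f) A"
    by (intro image_mset_cong) force
  moreover have "image_mset (map_prod id (f(x := c))) (add_mset ax A)
      = add_mset (a, c) (image_mset (map_prod id (f(x := c))) A)"
    using ax by simp
  ultimately show ?case using f B by metis
qed

definition initial_places :: "'s multiset \<Rightarrow> ('s, 't) uplace set" where
  "initial_places m = {(a, CPair {||} i) | a i. 1 \<le> i \<and> i \<le> count m a}"

definition post_places :: "('s, 't) ptnet \<Rightarrow> 't \<Rightarrow> ('s, 't) uplace fset \<Rightarrow> ('s, 't) uplace set" where
  "post_places N t H = {(a, CPair {|CTr t H|} i) | a i. 1 \<le> i \<and> i \<le> count (post N t) a}"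

lemma enc_marking_eq_mset_set: "enc_marking m = mset_set (initial_places m)"
  by (simp add: enc_marking_def initial_places_def)

lemma post_col_eq_mset_set: "post_col N t H = mset_set (post_places N t H)"
  by (simp add: post_col_def post_places_def)

lemma finite_initial_places: "finite (initial_places m)"
proof -
  have "initial_places m \<subseteq>
      (\<lambda>(a, i). (a, CPair {||} i)) ` (SIGMA a:set_mset m. {1..count m a})"
    by (auto simp: initial_places_def image_iff intro!: count_inI)
  then show ?thesis by (rule finite_subset) auto
qed

lemma finite_post_places: "finite (post_places N t H)"
proof -
  have "post_places N t H \<subseteq>
      (\<lambda>(a, i). (a, CPair {|CTr t H|} i)) ` (SIGMA a:set_mset (post N t). {1..count (post N t) a})"
    by (auto simp: post_places_def image_iff intro!: count_inI)
  then show ?thesis by (rule finite_subset) auto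
qed

lemma post_places_ne_empty:
  assumes "wf_ptnet N" and "t \<in> trans N"
  shows "post_places N t H \<noteq> {}"
proof -
  have "post N t \<noteq> {#}" using assms by (simp add: wf_ptnet_def)
  then obtain a where "a \<in># post N t" by blast
  then have "(a, CPair {|CTr t H|} 1) \<in> post_places N t H" by (auto simp: post_places_def)
  then show ?thesis by blast
qed

lemma utransitions_preset_ne_empty:
  assumes "wf_ptnet N" and "(t, H) \<in> utransitions N m"
  shows "H \<noteq> {||}"
  using assms by (auto simp: wf_ptnet_def elim: utransitions.cases)

lemma utransitions_trans: "(t, H) \<in> utransitions N m \<Longrightarrow> t \<in> trans N"
  by (auto elim: utransitions.cases)

lemma utransitions_pre: "(t, H) \<in> utransitions N m \<Longrightarrow> image_mset fst (mset_set (fset H)) = pre N t"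
  by (auto elim: utransitions.cases)

lemma initial_places_subset_uplaces: "initial_places m \<subseteq> uplaces N m"
  by (auto simp: initial_places_def intro: uplaces_utransitions.init)

lemma post_places_subset_uplaces: "(t, H) \<in> utransitions N m \<Longrightarrow> post_places N t H \<subseteq> uplaces N m"
  by (auto simp: post_places_def intro: uplaces_utransitions.pst)

lemma uplaces_ground: "p \<in> uplaces N m \<Longrightarrow> cvars (snd p) = {}"
proof (induction p rule: uplaces_utransitions.inducts(1)
    [where ?P2.0 = "\<lambda>t H. \<forall>p \<in> fset H. cvars (snd p) = {}"])
  case (pst t H i a)
  then show ?case by force
qed auto

subsection \<open>Configurations of the unfolding and their cuts\<close>

definition config_produced :: "('s, 't) ptnet \<Rightarrow> 's multiset \<Rightarrow> ('s, 't) utrans set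
    \<Rightarrow> ('s, 't) uplace set" where
  "config_produced N m C = initial_places m \<union> (\<Union>(t, H) \<in> C. post_places N t H)"

definition config_consumed :: "('s, 't) utrans set \<Rightarrow> ('s, 't) uplace set" where
  "config_consumed C = (\<Union>(t, H) \<in> C. fset H)"

definition config_cut :: "('s, 't) ptnet \<Rightarrow> 's multiset \<Rightarrow> ('s, 't) utrans set
    \<Rightarrow> ('s, 't) uplace set" where
  "config_cut N m C = config_produced N m C - config_consumed C"

definition configuration :: "('s, 't) ptnet \<Rightarrow> 's multiset \<Rightarrow> ('s, 't) utrans set \<Rightarrow> bool" where
  "configuration N m C \<longleftrightarrow> finite C \<and> C \<subseteq> utransitions N m
     \<and> pairwise (\<lambda>u v. fset (snd u) \<inter> fset (snd v) = {}) C
     \<and> config_consumed C \<subseteq> config_produced N m C"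

lemma config_produced_insert:
  "config_produced N m (insert (t, H) C) = config_produced N m C \<union> post_places N t H"
  by (auto simp: config_produced_def)

lemma config_consumed_insert: "config_consumed (insert (t, H) C) = config_consumed C \<union> fset H"
  by (auto simp: config_consumed_def)

lemma finite_config_cut: "finite C \<Longrightarrow> finite (config_cut N m C)"
  by (simp add: config_cut_def config_produced_def finite_initial_places finite_post_places
      case_prod_beta)

text \<open>The colour of a post-place records the transition that produced it.\<close>

lemma mem_if_post_places_produced:
  "p \<in> post_places N t H \<Longrightarrow> p \<in> config_produced N m C \<Longrightarrow> (t, H) \<in> C"
  by (auto simp: post_places_def config_produced_def initial_places_def)

lemma configuration_empty: "configuration N m {}" and config_cut_empty: "config_cut N m {} = initial_places m"
  by (simp_all add: configuration_def config_cut_def config_produced_def config_consumed_def)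

lemma config_cut_subset_uplaces: "configuration N m C \<Longrightarrow> config_cut N m C \<subseteq> uplaces N m"
  using initial_places_subset_uplaces post_places_subset_uplaces
  by (fastforce simp: configuration_def config_cut_def config_produced_def)

lemma configuration_insert:
  assumes C: "configuration N m C" and "wf_ptnet N" and tH: "(t, H) \<in> utransitions N m"
    and H: "fset H \<subseteq> config_cut N m C"
  shows "configuration N m (insert (t, H) C)"
    and "config_cut N m (insert (t, H) C) = post_places N t H \<union> (config_cut N m C - fset H)"
    and "post_places N t H \<inter> (config_cut N m C - fset H) = {}"
proof -
  have H_fresh: "fset H \<inter> config_consumed C = {}" using H by (auto simp: config_cut_def)
  have "(t, H) \<notin> C"
  proof
    assume "(t, H) \<in> C"
    then have "fset H \<subseteq> config_consumed C" by (auto simp: config_consumed_def)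
    with H_fresh utransitions_preset_ne_empty[OF assms(2) tH] show False by auto
  qed
  then have post_fresh: "post_places N t H \<inter> config_produced N m C = {}"
    using mem_if_post_places_produced[of _ N t H m C] by blast
  have "pairwise (\<lambda>u v. fset (snd u) \<inter> fset (snd v) = {}) (insert (t, H) C)"
    using C H_fresh unfolding configuration_def pairwise_insert config_consumed_def by fastforce
  then show "configuration N m (insert (t, H) C)"
    using C tH H unfolding configuration_def config_produced_insert config_consumed_insert
      config_cut_def by blast
  show "config_cut N m (insert (t, H) C) = post_places N t H \<union> (config_cut N m C - fset H)"
    using post_fresh H C unfolding config_cut_def config_produced_insert config_consumed_insert
      configuration_def by blast
  show "post_places N t H \<inter> (config_cut N m C - fset H) = {}"
    using post_fresh by (auto simp: config_cut_def)
qed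

lemma configuration_remove:
  assumes C: "configuration N m C" and "wf_ptnet N" and "t \<in> trans N"
    and post: "post_places N t H \<subseteq> config_cut N m C"
  shows "(t, H) \<in> C" and "configuration N m (C - {(t, H)})"
    and "config_cut N m (C - {(t, H)}) = fset H \<union> (config_cut N m C - post_places N t H)"
    and "fset H \<inter> (config_cut N m C - post_places N t H) = {}"
proof -
  obtain p where p: "p \<in> post_places N t H" using post_places_ne_empty[OF assms(2,3)] by blast
  then have "p \<in> config_produced N m C" using post by (auto simp: config_cut_def)
  with p show tH: "(t, H) \<in> C" by (rule mem_if_post_places_produced)
  define C' where "C' = C - {(t, H)}"
  have C_eq: "C = insert (t, H) C'" using tH by (auto simp: C'_def)
  have post_fresh: "post_places N t H \<inter> config_produced N m C' = {}"
    using mem_if_post_places_produced[of _ N t H m C'] by (auto simp: C'_def)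
  have "fset H \<inter> fset H' = {}" if "(t', H') \<in> C'" for t' H'
    using C tH that unfolding configuration_def pairwise_def C'_def by (metis DiffE insertI1 snd_conv)
  then have H_fresh: "fset H \<inter> config_consumed C' = {}"
    by (auto simp: config_consumed_def)
  have H_consumed: "fset H \<subseteq> config_consumed C"
    using tH by (auto simp: config_consumed_def)
  have "config_consumed C' \<subseteq> config_produced N m C'"
    using C post unfolding configuration_def C_eq config_produced_insert config_consumed_insert
      config_cut_def by blast
  moreover have "C' \<subseteq> C" by (auto simp: C'_def)
  ultimately have "configuration N m C'"
    using C by (auto simp: configuration_def pairwise_subset finite_subset)
  then show "configuration N m (C - {(t, H)})" by (simp add: C'_def)
  have "fset H \<subseteq> config_produced N m C'"
    using C post H_consumed
    unfolding configuration_def C_eq config_produced_insert config_cut_def by blast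
  then have "config_cut N m C' = fset H \<union> (config_cut N m C - post_places N t H)"
    using post_fresh H_fresh
    unfolding C_eq config_produced_insert config_consumed_insert config_cut_def by blast
  then show "config_cut N m (C - {(t, H)}) = fset H \<union> (config_cut N m C - post_places N t H)"
    by (simp add: C'_def)
  show "fset H \<inter> (config_cut N m C - post_places N t H) = {}"
    using H_consumed by (auto simp: config_cut_def)
qed

lemma ule_into_configuration:
  assumes "ule N z w" and "w \<in> Inl ` config_produced N m C \<union> Inr ` C"
    and consumed: "config_consumed C \<subseteq> config_produced N m C"
  shows "z \<in> Inl ` config_produced N m C \<union> Inr ` C
    \<and> (\<forall>p. z = Inl p \<and> z \<noteq> w \<longrightarrow> p \<in> config_consumed C)"
  using assms(1) unfolding ule_def
proof (induction rule: converse_rtrancl_induct)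
  case base
  then show ?case using assms(2) by blast
next
  case (step y z)
  from step.hyps(1) consider (pre) p t H where "y = Inl p" "z = Inr (t, H)" "p |\<in>| H"
    | (post) t H a i where "y = Inr (t, H)" "z = Inl (a, CPair {|CTr t H|} i)"
        "1 \<le> i" "i \<le> count (post N t) a"
    unfolding uflow_def by blast
  then show ?case
  proof cases
    case pre
    with step.IH have "(t, H) \<in> C" by auto
    then have "p \<in> config_consumed C" using pre(3) by (force simp: config_consumed_def)
    then show ?thesis using pre consumed by auto
  next
    case post
    then have "(a, CPair {|CTr t H|} i) \<in> post_places N t H" by (auto simp: post_places_def)
    moreover have "(a, CPair {|CTr t H|} i) \<in> config_produced N m C" using step.IH post by auto
    ultimately have "(t, H) \<in> C" by (rule mem_if_post_places_produced)
    then show ?thesis using post by auto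
  qed
qed

lemma UCO_if_subset_config_cut:
  assumes C: "configuration N m C" and X: "X \<subseteq> config_cut N m C"
  shows "UCO N (Inl ` X)"
proof -
  have consumed: "config_consumed C \<subseteq> config_produced N m C"
    and disjoint: "pairwise (\<lambda>u v. fset (snd u) \<inter> fset (snd v) = {}) C"
    using C by (auto simp: configuration_def)
  have below: "z \<in> Inl ` config_produced N m C \<union> Inr ` C
      \<and> (\<forall>p. z = Inl p \<and> z \<noteq> Inl x \<longrightarrow> p \<in> config_consumed C)"
    if "x \<in> X" "ule N z (Inl x)" for x z
    using ule_into_configuration[OF that(2) _ consumed] X that(1) by (auto simp: config_cut_def)
  have history: "u \<in> C" if "x \<in> X" "ule N (Inr u) (Inl x)" for x u
    using below[OF that] by auto
  have not_consumed: "x \<notin> config_consumed C" if "x \<in> X" for x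
    using X that by (auto simp: config_cut_def)
  have "uco N (Inl x) (Inl y)" if xy: "x \<in> X" "y \<in> X" "x \<noteq> y" for x y
  proof -
    have "\<not> ule N (Inl x) (Inl y)" using below[OF xy(2), of "Inl x"] not_consumed[OF xy(1)] xy(3) by blast
    moreover have "\<not> ule N (Inl y) (Inl x)" using below[OF xy(1), of "Inl y"] not_consumed[OF xy(2)] xy(3) by blast
    moreover have "\<not> uconfl N (Inl x) (Inl y)"
    proof
      assume "uconfl N (Inl x) (Inl y)"
      then obtain t1 H1 t2 H2 where "ule N (Inr (t1, H1)) (Inl x)" "ule N (Inr (t2, H2)) (Inl y)"
        and ne: "(t1, H1) \<noteq> (t2, H2)" "H1 |\<inter>| H2 \<noteq> {||}" unfolding uconfl_def by blast
      then have "(t1, H1) \<in> C" "(t2, H2) \<in> C" using history xy by blast+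
      then have "fset H1 \<inter> fset H2 = {}" using disjoint ne(1) unfolding pairwise_def by fastforce
      with ne(2) show False by (metis bot_fset.rep_eq fset_inject inf_fset.rep_eq)
    qed
    ultimately show ?thesis using xy(3) by (simp add: uco_def)
  qed
  moreover have "{u. \<exists>x \<in> Inl ` X. ule N (Inr u) x} \<subseteq> C" using history by auto
  then have "finite {u. \<exists>x \<in> Inl ` X. ule N (Inr u) x}"
    using C by (auto simp: configuration_def intro: finite_subset)
  ultimately show ?thesis by (auto simp: UCO_def)
qed

definition cut_marking :: "('s, 't) ptnet \<Rightarrow> 's multiset \<Rightarrow> ('s, 't) uplace multiset \<Rightarrow> bool" where
  "cut_marking N m M \<longleftrightarrow> (\<exists>C. configuration N m C \<and> M = mset_set (config_cut N m C))"

lemma cut_marking_enc_marking: "cut_marking N m (enc_marking m)"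
  unfolding cut_marking_def enc_marking_eq_mset_set
  by (metis configuration_empty config_cut_empty)

lemma ground_if_cut_marking: "cut_marking N m M \<Longrightarrow> ground M"
  using config_cut_subset_uplaces uplaces_ground finite_config_cut
  by (fastforce simp: cut_marking_def configuration_def ground_def)

lemma rev_unfold_net_simps:
  "trans (rev_ptnet (unfold_net N m)) = Fwd ` utransitions N m \<union> Bwd ` utransitions N m"
  "pre (rev_ptnet (unfold_net N m)) (Fwd (t, H)) = mset_set (fset H)"
  "post (rev_ptnet (unfold_net N m)) (Fwd (t, H)) = post_col N t H"
  "pre (rev_ptnet (unfold_net N m)) (Bwd (t, H)) = post_col N t H"
  "post (rev_ptnet (unfold_net N m)) (Bwd (t, H)) = mset_set (fset H)"
  by (simp_all add: rev_ptnet_def unfold_net_def)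

lemma ptfire_rev_unfold_net_iff:
  "ptfire (rev_ptnet (unfold_net N m)) M1 v M2 \<longleftrightarrow> (\<exists>t H m3. (t, H) \<in> utransitions N m \<and>
     (v = Fwd (t, H) \<and> M1 = mset_set (fset H) + m3 \<and> M2 = post_col N t H + m3
      \<or> v = Bwd (t, H) \<and> M1 = post_col N t H + m3 \<and> M2 = mset_set (fset H) + m3))"
  by (auto simp: ptfire_def rev_unfold_net_simps)

lemma cut_marking_fire:
  assumes "cut_marking N m M1" and wf: "wf_ptnet N"
    and "ptfire (rev_ptnet (unfold_net N m)) M1 v M2"
  shows "cut_marking N m M2"
proof -
  obtain C where C: "configuration N m C" and M1: "M1 = mset_set (config_cut N m C)"
    using assms(1) by (auto simp: cut_marking_def)
  have fin: "finite (config_cut N m C)" using C by (simp add: configuration_def finite_config_cut)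
  obtain t H m3 where tH: "(t, H) \<in> utransitions N m" and
    "v = Fwd (t, H) \<and> M1 = mset_set (fset H) + m3 \<and> M2 = post_col N t H + m3
      \<or> v = Bwd (t, H) \<and> M1 = post_col N t H + m3 \<and> M2 = mset_set (fset H) + m3"
    using assms(3) by (auto simp: ptfire_rev_unfold_net_iff)
  then consider
      "mset_set (config_cut N m C) = mset_set (fset H) + m3" "M2 = mset_set (post_places N t H) + m3"
    | "mset_set (config_cut N m C) = mset_set (post_places N t H) + m3" "M2 = mset_set (fset H) + m3"
    using M1 by (auto simp: post_col_eq_mset_set)
  then show ?thesis
  proof cases
    case 1
    have H: "fset H \<subseteq> config_cut N m C" by (rule subset_if_mset_set_eq_add[OF finite_fset 1(1)])
    note fwd = configuration_insert[OF C wf tH H]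
    show ?thesis
      using fwd(1) 1 mset_set_exchange[OF fin finite_fset finite_post_places 1(1) fwd(3)]
      by (auto simp: cut_marking_def fwd(2) intro!: exI[of _ "insert (t, H) C"])
  next
    case 2
    have post: "post_places N t H \<subseteq> config_cut N m C"
      by (rule subset_if_mset_set_eq_add[OF finite_post_places 2(1)])
    note bwd = configuration_remove[OF C wf utransitions_trans[OF tH] post]
    show ?thesis
      using bwd(2) 2 mset_set_exchange[OF fin finite_post_places finite_fset 2(1) bwd(4)]
      by (auto simp: cut_marking_def bwd(3) intro!: exI[of _ "C - {(t, H)}"])
  qed
qed

lemma fset_mset_to_fset [simp]: "fset (mset_to_fset M) = set_mset M"
  by (simp add: mset_to_fset_def Abs_fset_inverse)

lemma mset_to_fset_mset_set_fset [simp]: "mset_to_fset (mset_set (fset H)) = H"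
  by (simp add: mset_to_fset_def fset_inverse)

lemma mset_to_fset_msubst: "mset_to_fset (msubst \<sigma> M) = map_prod id (subst \<sigma>) |`| mset_to_fset M"
  by (metis fset_inject fset_mset_to_fset fimage.rep_eq msubst_def set_image_mset)

lemma msubst_enc_pre:
  "msubst \<sigma> (enc_pre vs t) = image_mset (map_prod id (\<lambda>x. subst \<sigma> (CVar x))) (vs t)"
  by (auto simp: msubst_def enc_pre_def multiset.map_comp intro!: image_mset_cong)

lemma fst_msubst_enc_pre:
  "valid_vars N vs \<Longrightarrow> t \<in> trans N \<Longrightarrow> image_mset fst (msubst \<sigma> (enc_pre vs t)) = pre N t"
  by (simp add: msubst_enc_pre valid_vars_def multiset.map_comp comp_def)

lemma msubst_post_col:
  "msubst \<sigma> (post_col N t H) = post_col N t (map_prod id (subst \<sigma>) |`| H)"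
proof -
  have "map_prod id (subst \<sigma>) ` post_places N t H = post_places N t (map_prod id (subst \<sigma>) |`| H)"
    by (force simp: post_places_def image_iff)
  moreover have "inj_on (map_prod id (subst \<sigma>)) (post_places N t H)"
    by (auto simp: inj_on_def post_places_def)
  ultimately show ?thesis
    by (simp add: msubst_def post_col_eq_mset_set image_mset_mset_set)
qed

lemma ex_msubst_enc_pre_eq:
  assumes "valid_vars N vs" and "(t, H) \<in> utransitions N m"
  shows "\<exists>\<sigma>. msubst \<sigma> (enc_pre vs t) = mset_set (fset H)"
proof -
  have t: "t \<in> trans N" using assms(2) by (rule utransitions_trans)
  have "image_mset fst (vs t) = image_mset fst (mset_set (fset H))"
    using assms t by (simp add: valid_vars_def utransitions_pre)
  moreover have "\<forall>x. count (image_mset snd (vs t)) x \<le> 1"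
    using assms(1) t by (simp add: valid_vars_def)
  ultimately obtain f where "image_mset (map_prod id f) (vs t) = mset_set (fset H)"
    using ex_map_snd_if_same_fst by blast
  then have "msubst (\<lambda>x. Some (f x)) (enc_pre vs t) = mset_set (fset H)"
    by (simp add: msubst_enc_pre)
  then show ?thesis by blast
qed

lemma cfire_rev_enc_iff:
  "cfire (rev_cnet (enc N vs)) M1 u \<sigma> M2 \<longleftrightarrow> ground M1 \<and> ground M2 \<and>
    (\<exists>t m3. t \<in> trans N \<and>
      (let A = msubst \<sigma> (enc_pre vs t) in
        u = Fwd t \<and> M1 = A + m3 \<and> M2 = post_col N t (mset_to_fset A) + m3
        \<or> u = Bwd t \<and> M1 = post_col N t (mset_to_fset A) + m3 \<and> M2 = A + m3))"
  by (auto simp: cfire_def rev_cnet_def enc_def msubst_post_col mset_to_fset_msubst Let_def)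

lemma clabel_enc:
  "clabel (enc N vs) (Fwd t) \<sigma> = Fwd (t, mset_to_fset (msubst \<sigma> (enc_pre vs t)))"
  "clabel (enc N vs) (Bwd t) \<sigma> = Bwd (t, mset_to_fset (msubst \<sigma> (enc_pre vs t)))"
  by (simp_all add: clabel_def enc_def)

subsection \<open>Simulation in both directions\<close>

lemma utransitions_if_subset_config_cut:
  assumes C: "configuration N m C" and t: "t \<in> trans N"
    and pre: "image_mset fst (mset_set (fset H)) = pre N t" and H: "fset H \<subseteq> config_cut N m C"
  shows "(t, H) \<in> utransitions N m"
proof (rule uplaces_utransitions.trn[OF t])
  show "\<forall>p \<in> fset H. p \<in> uplaces N m" using H config_cut_subset_uplaces[OF C] by blast
  show "UCO N (Inl ` fset H)" using UCO_if_subset_config_cut[OF C H] .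
qed (rule pre)

lemma ptfire_if_cfire:
  assumes M1: "cut_marking N m M1" and wf: "wf_ptnet N" and vv: "valid_vars N vs"
    and "cfire (rev_cnet (enc N vs)) M1 u \<sigma> M2"
  shows "ptfire (rev_ptnet (unfold_net N m)) M1 (clabel (enc N vs) u \<sigma>) M2"
proof -
  obtain C where C: "configuration N m C" and M1_cut: "M1 = mset_set (config_cut N m C)"
    using M1 by (auto simp: cut_marking_def)
  obtain t m3 where t: "t \<in> trans N" and fire_t:
    "let A = msubst \<sigma> (enc_pre vs t) in
        u = Fwd t \<and> M1 = A + m3 \<and> M2 = post_col N t (mset_to_fset A) + m3
        \<or> u = Bwd t \<and> M1 = post_col N t (mset_to_fset A) + m3 \<and> M2 = A + m3"
    using assms(4) by (auto simp: cfire_rev_enc_iff)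
  define A where "A = msubst \<sigma> (enc_pre vs t)"
  define H where "H = mset_to_fset A"
  have fst_A: "image_mset fst A = pre N t"
    unfolding A_def using vv t by (rule fst_msubst_enc_pre)
  have label: "clabel (enc N vs) (Fwd t) \<sigma> = Fwd (t, H)" "clabel (enc N vs) (Bwd t) \<sigma> = Bwd (t, H)"
    by (simp_all add: clabel_enc A_def H_def)
  from fire_t have "u = Fwd t \<and> M1 = A + m3 \<and> M2 = post_col N t H + m3
      \<or> u = Bwd t \<and> M1 = post_col N t H + m3 \<and> M2 = A + m3"
    by (simp add: Let_def A_def H_def)
  then show ?thesis
  proof (elim disjE conjE)
    assume fwd: "u = Fwd t" "M1 = A + m3" "M2 = post_col N t H + m3"
    have A_set: "mset_set (set_mset A) = A"
      using fwd(2) M1_cut by (metis mset_set_set_mset_if_subseteq_mset_set mset_subset_eq_add_left)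
    have "finite (config_cut N m C)" using C by (simp add: configuration_def finite_config_cut)
    moreover have "set_mset A \<subseteq> set_mset M1" using fwd(2) by simp
    ultimately have "fset H \<subseteq> config_cut N m C" using M1_cut by (simp add: H_def)
    then have "(t, H) \<in> utransitions N m"
      using utransitions_if_subset_config_cut[OF C t] A_set fst_A by (simp add: H_def)
    then show ?thesis using fwd A_set label by (simp add: ptfire_def rev_unfold_net_simps H_def)
  next
    assume bwd: "u = Bwd t" "M1 = post_col N t H + m3" "M2 = A + m3"
    have "post_places N t H \<subseteq> config_cut N m C"
      using bwd(2) M1_cut by (simp add: post_col_eq_mset_set subset_if_mset_set_eq_add finite_post_places)
    then have "(t, H) \<in> C" by (rule configuration_remove(1)[OF C wf t])
    then have tH: "(t, H) \<in> utransitions N m" using C by (auto simp: configuration_def)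
    then have "size A = card (set_mset A)"
      using fst_A utransitions_pre[OF tH] by (metis size_image_mset size_mset_set H_def fset_mset_to_fset)
    then have "mset_set (set_mset A) = A" by (rule mset_set_set_mset_if_size_eq_card)
    then show ?thesis using bwd label tH by (simp add: ptfire_def rev_unfold_net_simps H_def)
  qed
qed

lemma cfire_if_ptfire:
  assumes M1: "cut_marking N m M1" and wf: "wf_ptnet N" and vv: "valid_vars N vs"
    and fire: "ptfire (rev_ptnet (unfold_net N m)) M1 v M2"
  shows "\<exists>u \<sigma>. cfire (rev_cnet (enc N vs)) M1 u \<sigma> M2 \<and> clabel (enc N vs) u \<sigma> = v"
proof -
  obtain t H m3 where tH: "(t, H) \<in> utransitions N m" and fire_tH:
    "v = Fwd (t, H) \<and> M1 = mset_set (fset H) + m3 \<and> M2 = post_col N t H + m3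
      \<or> v = Bwd (t, H) \<and> M1 = post_col N t H + m3 \<and> M2 = mset_set (fset H) + m3"
    using fire by (auto simp: ptfire_rev_unfold_net_iff)
  obtain \<sigma> where \<sigma>: "msubst \<sigma> (enc_pre vs t) = mset_set (fset H)"
    using ex_msubst_enc_pre_eq[OF vv tH] by blast
  have "ground M1" and "ground M2"
    using M1 cut_marking_fire[OF M1 wf fire] by (simp_all add: ground_if_cut_marking)
  then have "cfire (rev_cnet (enc N vs)) M1 (case v of Fwd _ \<Rightarrow> Fwd t | Bwd _ \<Rightarrow> Bwd t) \<sigma> M2"
    using fire_tH utransitions_trans[OF tH] \<sigma> by (auto simp: cfire_rev_enc_iff)
  moreover have "clabel (enc N vs) (case v of Fwd _ \<Rightarrow> Fwd t | Bwd _ \<Rightarrow> Bwd t) \<sigma> = v"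
    using fire_tH \<sigma> by (auto simp: clabel_enc)
  ultimately show ?thesis by blast
qed

lemma creach_imp_ptreach:
  assumes "wf_ptnet N" and "valid_vars N vs"
  shows "creach (enc N vs) M0 s M \<Longrightarrow> M0 = enc_marking m
    \<Longrightarrow> ptreach (rev_ptnet (unfold_net N m)) M0 s M \<and> cut_marking N m M"
proof (induction rule: creach.induct)
  case refl
  then show ?case by (simp add: ptreach.refl cut_marking_enc_marking)
next
  case (step M0 s M1 u \<sigma> M2)
  then have "ptfire (rev_ptnet (unfold_net N m)) M1 (clabel (enc N vs) u \<sigma>) M2"
    using ptfire_if_cfire assms by blast
  then show ?case using step assms(1) by (blast intro: ptreach.step cut_marking_fire)
qed

lemma ptreach_imp_creach:
  assumes "wf_ptnet N" and "valid_vars N vs"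
  shows "ptreach (rev_ptnet (unfold_net N m)) M0 s M \<Longrightarrow> M0 = enc_marking m
    \<Longrightarrow> creach (enc N vs) M0 s M \<and> cut_marking N m M"
proof (induction rule: ptreach.induct)
  case refl
  then show ?case by (simp add: creach.refl cut_marking_enc_marking)
next
  case (step M0 s M1 v M2)
  then obtain u \<sigma> where "cfire (rev_cnet (enc N vs)) M1 u \<sigma> M2" "clabel (enc N vs) u \<sigma> = v"
    using cfire_if_ptfire assms by blast
  then show ?case using step assms(1) by (metis creach.step cut_marking_fire)
qed

theorem mainTheorem15:
  fixes N :: "('s, 't) ptnet" and m :: "'s multiset"
    and vs :: "'t \<Rightarrow> ('s \<times> nat) multiset"
    and s :: "('s, 't) utrans rt list" and m'' :: "('s \<times> ('s, 't) col) multiset"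
  assumes "wf_ptnet N" and "marking_of N m" and "valid_vars N vs"
  shows "creach (enc N vs) (enc_marking m) s m''
     \<longleftrightarrow> ptreach (rev_ptnet (unfold_net N m)) (unfold_marking m) s m''"
  using creach_imp_ptreach[OF assms(1,3)] ptreach_imp_creach[OF assms(1,3)]
  by (auto simp: unfold_marking_def)

end
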